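(* Let $k\ge 2$, $p\in(0,1)$, $q=1-p$, and let $L^{(k)}(z)=\sum_{n\ge 2}L^{(k)}_n(p)z^n$. Then, as formal power series in $z$, $$L^{(k)}(z)=\frac{z\,(kp-(k-1))\,S^{(k)}(p^{k-1}qz)-qz^2\big((2k-1)p-(2k-2)+(k-1)qz\big)}{q^2(1-z)^2}.$$
   Context: For $i\ge 1$, $s^{(k)}_i=\frac{k-1}{ki-1}\binom{ki-1}{i-1}$ and $S^{(k)}(z)=\sum_{i\ge1}s^{(k)}_i z^i$. For $n\ge 2$, $L^{(k)}_n(p)=(p^{k-1}q)^n\frac1q\sum_{j=k}^{(k-1)n} j\,d^{(k)}_{n,j}(1/p)^j$, where for $k\le j\le (k-1)n$, $d^{(k)}_{n,j}=\binom{kn-2-j}{n-2}-\sum_{\ell=1}^{\,n-\lceil j/(k-1)\rceil} s^{(k)}_\ell\binom{k(n-\ell)-1-j}{n-\ell-1}$. *)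

theory Defs
  imports "HOL-Computational_Algebra.Formal_Power_Series" Complex_Main
begin

definition s_coef :: "nat \<Rightarrow> nat \<Rightarrow> real" where
  "s_coef k i = (real k - 1) / (real k * real i - 1) * real ((k * i - 1) choose (i - 1))"

definition S_fps :: "nat \<Rightarrow> real fps" where
  "S_fps k = Abs_fps (\<lambda>i. if i = 0 then 0 else s_coef k i)"

definition d_coef :: "nat \<Rightarrow> nat \<Rightarrow> nat \<Rightarrow> real" where
  "d_coef k n j = real ((k * n - 2 - j) choose (n - 2))
     - (\<Sum>l = 1..n - nat \<lceil>real j / real (k - 1)\<rceil>.
          s_coef k l * real ((k * (n - l) - 1 - j) choose (n - l - 1)))"

definition L_coef :: "nat \<Rightarrow> nat \<Rightarrow> real \<Rightarrow> real" where
  "L_coef k n p = (let q = 1 - p in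
     (p ^ (k - 1) * q) ^ n * (1 / q) *
       (\<Sum>j = k..(k - 1) * n. real j * d_coef k n j * (1 / p) ^ j))"

definition L_fps :: "nat \<Rightarrow> real \<Rightarrow> real fps" where
  "L_fps k p = Abs_fps (\<lambda>n. if n \<ge> 2 then L_coef k n p else 0)"

end

(*
  Let D_n(x) = sum_j d_{n,j} x^j for n >= 2 and D_1(x) = x^(k-1). Pascal's rule for the
  binomials in d_{n,j}, together with the convolution identity
  sum_{i<=n} s_{i+1} binom(y + k(n-i), n-i) = binom(y + k(n+1) - 1, n) for the Fuss-Catalan
  numbers s_i, gives (x - 1) D_n(x) = x^k (D_{n-1}(x) - s_{n-1}).
  Evaluated at x = 1/p together with its derivative, and with a = p^(k-1) q, this becomes
  M_n = M_{n-1} - a^(n-1) s_{n-1} for M_n = a^n D_n(1/p) and q L_n = q L_{n-1} + (kq - 1) M_n.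
  Hence (1 - z) M(z) = q z - z S(a z), and the formula for L(z) follows by eliminating M(z).
*)

theory Submission
  imports Defs "HOL-Computational_Algebra.Polynomial"
begin

unbundle fps_syntax

section \<open>A Fuss--Catalan convolution identity\<close>

lemma gbinomial_Suc_diff_pred:
  fixes a :: "'a::field_char_0"
  shows "(a gchoose Suc m) - ((a - 1) gchoose Suc m) = (a - 1) gchoose m"
  using gbinomial_Suc_Suc[of "a - 1" m] by simp

text \<open>\<open>rothe_coeff k x i = x / (x + k i) * (x + k i gchoose i)\<close> are Rothe's coefficients, and
  \<open>rothe_conv k n x y = (x + y + k n) gchoose n\<close> is the Rothe--Hagen identity. It is only needed
  for \<open>x \<in> \<nat> \<union> {-1}\<close>, where induction on \<open>x\<close> via \<open>rothe_conv_Suc_diff\<close> suffices.\<close>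
definition rothe_coeff :: "nat \<Rightarrow> real \<Rightarrow> nat \<Rightarrow> real" where
  "rothe_coeff k x i = ((x + real k * real i) gchoose i)
     - (if i = 0 then 0 else real k * ((x + real k * real i - 1) gchoose (i - 1)))"

definition rothe_conv :: "nat \<Rightarrow> nat \<Rightarrow> real \<Rightarrow> real \<Rightarrow> real" where
  "rothe_conv k n x y =
     (\<Sum>i\<le>n. rothe_coeff k x i * ((y + real k * real (n - i)) gchoose (n - i)))"

lemma rothe_coeff_0 [simp]: "rothe_coeff k x 0 = 1"
  by (simp add: rothe_coeff_def)

lemma rothe_coeff_zero_left: "i > 0 \<Longrightarrow> rothe_coeff k 0 i = 0"
  by (simp add: rothe_coeff_def gbinomial_absorption'[of i "real k * real i"])

lemma rothe_coeff_Suc_diff: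
  "rothe_coeff k x (Suc m) - rothe_coeff k (x - 1) (Suc m) = rothe_coeff k (x + real k - 1) m"
proof (cases m)
  case 0
  then show ?thesis by (simp add: rothe_coeff_def)
next
  case (Suc m')
  have "((x + real k * real (Suc m)) gchoose Suc m) - ((x - 1 + real k * real (Suc m)) gchoose Suc m)
      = (x + real k - 1 + real k * real m) gchoose m"
    using gbinomial_Suc_diff_pred[of "x + real k * real (Suc m)" m] by (simp add: algebra_simps)
  moreover have "((x + real k * real (Suc m) - 1) gchoose Suc m')
        - ((x - 1 + real k * real (Suc m) - 1) gchoose Suc m')
      = (x + real k - 1 + real k * real m - 1) gchoose m'"
    using gbinomial_Suc_diff_pred[of "x + real k * real (Suc m) - 1" m']
    by (simp add: algebra_simps)
  moreover have "x + real k * real (Suc m) - 1 = x + real k - 1 + real k * real m"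
    "x + real k - 1 + real k * real m - 1 = x + real k * real (Suc m) - 2"
    by (simp_all add: algebra_simps)
  ultimately show ?thesis
    unfolding rothe_coeff_def using Suc by (simp add: algebra_simps)
qed

lemma rothe_conv_Suc_diff:
  "rothe_conv k (Suc n) x y - rothe_conv k (Suc n) (x - 1) y = rothe_conv k n (x + real k - 1) y"
proof -
  have "rothe_conv k (Suc n) x y - rothe_conv k (Suc n) (x - 1) y
     = (\<Sum>i\<le>n. (rothe_coeff k x (Suc i) - rothe_coeff k (x - 1) (Suc i))
                 * ((y + real k * real (n - i)) gchoose (n - i)))"
    unfolding rothe_conv_def sum.atMost_Suc_shift by (simp add: algebra_simps sum_subtractf)
  then show ?thesis
    unfolding rothe_conv_def rothe_coeff_Suc_diff .
qed

lemma rothe_conv_of_nat: "rothe_conv k n (real m) y = (real m + y + real k * real n) gchoose n"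
proof (induction n arbitrary: m)
  case 0
  then show ?case by (simp add: rothe_conv_def)
next
  case (Suc n)
  note IH = Suc.IH
  show ?case
  proof (induction m)
    case 0
    show ?case
      unfolding rothe_conv_def sum.atMost_Suc_shift by (simp add: rothe_coeff_zero_left)
  next
    case (Suc m)
    have "rothe_conv k (Suc n) (real (Suc m)) y
        = rothe_conv k (Suc n) (real m) y + rothe_conv k n (real (m + k)) y"
      using rothe_conv_Suc_diff[of k n "real (Suc m)" y] by (simp add: algebra_simps)
    also have "\<dots> = ((real m + y + real k * real (Suc n)) gchoose Suc n)
        + ((real (m + k) + y + real k * real n) gchoose n)"
      using Suc.IH IH[of "m + k"] by simp
    also have "\<dots> = (real (Suc m) + y + real k * real (Suc n)) gchoose Suc n"
      using gbinomial_Suc_diff_pred[of "real (Suc m) + y + real k * real (Suc n)" n]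
      by (simp add: algebra_simps)
    finally show ?case .
  qed
qed

lemma rothe_conv_minus_one:
  assumes "k \<ge> 1"
  shows "rothe_conv k n (-1) y = (y - 1 + real k * real n) gchoose n"
proof (cases n)
  case 0
  then show ?thesis by (simp add: rothe_conv_def)
next
  case (Suc n')
  have "rothe_conv k n (-1) y = rothe_conv k n 0 y - rothe_conv k n' (real k - 1) y"
    using rothe_conv_Suc_diff[of k n' 0 y] Suc by simp
  also have "\<dots> = ((y + real k * real n) gchoose n)
      - ((real (k - 1) + y + real k * real n') gchoose n')"
    using rothe_conv_of_nat[of k n 0 y] rothe_conv_of_nat[of k n' "k - 1" y] assms
    by simp
  also have "\<dots> = (y - 1 + real k * real n) gchoose n"
    using gbinomial_Suc_diff_pred[of "y + real k * real n" n'] Suc assms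
    by (simp add: algebra_simps)
  finally show ?thesis .
qed

lemma s_coef_Suc_eq_rothe_coeff:
  assumes "k \<ge> 2"
  shows "s_coef k (Suc m) = - rothe_coeff k (-1) (Suc m)"
proof -
  define a where "a = real k * real (Suc m) - 1"
  have "a \<ge> 1" "real k > 1"
    using assms by (auto simp: a_def algebra_simps intro: order.trans[of _ "real k"])
  have "real (k * Suc m - 1) = a"
    using assms by (simp add: a_def algebra_simps)
  then have "s_coef k (Suc m) = (real k - 1) / a * (a gchoose m)"
    by (simp add: s_coef_def a_def binomial_gbinomial)
  also have "a gchoose m = a * ((a - 1) gchoose m) / ((real k - 1) * real (Suc m))"
  proof -
    have "a - real m = (real k - 1) * real (Suc m)"
      by (simp add: a_def algebra_simps)
    then have "(real k - 1) * real (Suc m) * (a gchoose m) = a * ((a - 1) gchoose m)"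
      using gbinomial_absorb_comp[of a m] by simp
    moreover have "(real k - 1) * real (Suc m) \<noteq> 0"
      using \<open>real k > 1\<close> by simp
    ultimately show ?thesis
      by (simp add: eq_divide_eq mult.commute)
  qed
  finally have s: "s_coef k (Suc m) = ((a - 1) gchoose m) / real (Suc m)"
    using \<open>a \<ge> 1\<close> \<open>real k > 1\<close> by simp
  have "rothe_coeff k (-1) (Suc m) = (a gchoose Suc m) - real k * ((a - 1) gchoose m)"
    by (simp add: rothe_coeff_def a_def algebra_simps)
  also have "\<dots> = (a / real (Suc m) - real k) * ((a - 1) gchoose m)"
    using gbinomial_absorption'[of "Suc m" a] by (simp add: algebra_simps)
  also have "a / real (Suc m) - real k = - 1 / real (Suc m)"
    by (simp add: a_def field_simps)
  finally show ?thesis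
    using s by simp
qed

lemma fuss_catalan_convolution:
  assumes "k \<ge> 2"
  shows "(\<Sum>i\<le>n. s_coef k (Suc i) * ((y + real k * real (n - i)) gchoose (n - i)))
       = (y + real k * real (Suc n) - 1) gchoose n"
proof -
  have "rothe_conv k (Suc n) (-1) y
      = ((y + real k * real (Suc n)) gchoose Suc n)
        - (\<Sum>i\<le>n. s_coef k (Suc i) * ((y + real k * real (n - i)) gchoose (n - i)))"
    unfolding rothe_conv_def sum.atMost_Suc_shift using s_coef_Suc_eq_rothe_coeff[OF assms]
    by (simp add: sum_negf)
  then show ?thesis
    using rothe_conv_minus_one[of k "Suc n" y] assms
      gbinomial_Suc_diff_pred[of "y + real k * real (Suc n)" n]
    by (simp add: algebra_simps)
qed

lemma fuss_catalan_convolution_nat: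
  assumes "k \<ge> 2"
  shows "(\<Sum>i\<le>n. s_coef k (Suc i) * real ((y + k * (n - i) - 1) choose (n - i)))
       = real ((y + k * Suc n - 2) choose n)"
proof -
  have "real ((y + k * (n - i) - 1) choose (n - i))
      = (real y - 1 + real k * real (n - i)) gchoose (n - i)" for i
  proof (cases "i < n")
    case True
    then have "y + k * (n - i) \<ge> 1"
      using assms by (simp add: Suc_le_eq)
    then have "real (y + k * (n - i) - 1) = real y - 1 + real k * real (n - i)"
      by (simp only: of_nat_diff of_nat_add of_nat_mult)
    then show ?thesis by (simp add: binomial_gbinomial)
  qed simp
  moreover have "real (y + k * Suc n - 2) = real y - 1 + real k * real (Suc n) - 1"
    using assms by (simp add: algebra_simps)
  ultimately show ?thesis
    using fuss_catalan_convolution[OF assms, where n = n and y = "real y - 1"]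
    by (simp add: binomial_gbinomial)
qed

section \<open>Differences of the coefficients \<open>d\<close>\<close>

lemma binomial_diff_pred:
  assumes "1 \<le> r" and "1 \<le> m \<or> 2 \<le> r"
  shows "real (m choose r) - real ((m - 1) choose r) = real ((m - 1) choose (r - 1))"
proof (cases m)
  case (Suc m')
  obtain r' where "r = Suc r'"
    using assms(1) by (cases r) auto
  then show ?thesis
    using Suc binomial_Suc_Suc[of m' r'] by simp
qed (use assms in simp)

lemma self_le_pred_mult: "k \<ge> 2 \<Longrightarrow> n \<ge> 2 \<Longrightarrow> k \<le> (k - 1) * n" for k n :: nat
  using mult_le_mono2[of 2 n "k - 1"] by linarith

lemma less_nat_ceiling_divide_iff:
  assumes "c > 0"
  shows "r < nat \<lceil>real j / real c\<rceil> \<longleftrightarrow> c * r < j"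
proof -
  have "r < nat \<lceil>real j / real c\<rceil> \<longleftrightarrow> int r < \<lceil>real j / real c\<rceil>"
    by linarith
  also have "\<dots> \<longleftrightarrow> real r < real j / real c"
    by (simp add: less_ceiling_iff)
  also have "\<dots> \<longleftrightarrow> real (c * r) < real j"
    using assms by (simp add: pos_less_divide_eq mult.commute)
  finally show ?thesis
    by (simp only: of_nat_less_iff)
qed

lemma nat_ceiling_divide_eqI:
  assumes "c > 0" and "\<And>r. c * r < j \<longleftrightarrow> r < v"
  shows "nat \<lceil>real j / real c\<rceil> = v"
  using less_nat_ceiling_divide_iff[OF assms(1)] assms(2)
  by (metis linorder_neqE_nat less_irrefl)

text \<open>The ceiling in \<open>d_coef\<close> only cuts off the term \<open>l = n - 1\<close> and terms that vanish anyway.\<close>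
lemma d_coef_eq:
  assumes k2: "k \<ge> 2" and "n \<ge> 2" and "k \<le> j" and "j \<le> (k - 1) * n"
  shows "d_coef k n j = real ((k * n - 2 - j) choose (n - 2))
     - (\<Sum>l = 1..n - 2. s_coef k l * real ((k * (n - l) - 1 - j) choose (n - l - 1)))"
proof -
  define c where "c = nat \<lceil>real j / real (k - 1)\<rceil>"
  have c_iff: "r < c \<longleftrightarrow> (k - 1) * r < j" for r
    unfolding c_def using k2 by (intro less_nat_ceiling_divide_iff) simp
  have "2 \<le> c" "c \<le> n"
    using c_iff[of 1] c_iff[of n] assms by auto
  have "(\<Sum>l = 1..n - c. s_coef k l * real ((k * (n - l) - 1 - j) choose (n - l - 1)))
      = (\<Sum>l = 1..n - 2. s_coef k l * real ((k * (n - l) - 1 - j) choose (n - l - 1)))"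
  proof (rule sum.mono_neutral_left)
    show "{1..n - c} \<subseteq> {1..n - 2}"
      using \<open>2 \<le> c\<close> by auto
  next
    show "\<forall>l\<in>{1..n - 2} - {1..n - c}.
        s_coef k l * real ((k * (n - l) - 1 - j) choose (n - l - 1)) = 0"
    proof
      fix l
      assume "l \<in> {1..n - 2} - {1..n - c}"
      then have "(k - 1) * (n - l) < j" "n - l \<ge> 2"
        using c_iff[of "n - l"] by auto
      moreover have "k * (n - l) = (k - 1) * (n - l) + (n - l)"
        using k2 by (simp add: diff_mult_distrib)
      ultimately have "(k * (n - l) - 1 - j) choose (n - l - 1) = 0"
        by (intro binomial_eq_0) linarith
      then show "s_coef k l * real ((k * (n - l) - 1 - j) choose (n - l - 1)) = 0"
        by simp
    qed
  qed simp
  then show ?thesis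
    unfolding d_coef_def c_def by simp
qed

lemma d_coef_top:
  assumes "k \<ge> 2" and "n \<ge> 2"
  shows "d_coef k n ((k - 1) * n) = 1"
proof -
  have "nat \<lceil>real ((k - 1) * n) / real (k - 1)\<rceil> = n"
    using assms by (intro nat_ceiling_divide_eqI) auto
  moreover have "k * n = (k - 1) * n + n"
    using assms by (cases k) auto
  then have "k * n - 2 - (k - 1) * n = n - 2"
    by simp
  ultimately show ?thesis
    unfolding d_coef_def by simp
qed

lemma d_coef_two:
  assumes "k \<ge> 2" and "k \<le> j" and "j \<le> (k - 1) * 2"
  shows "d_coef k 2 j = 1"
  using d_coef_eq[OF assms(1) order.refl assms(2,3)] by simp

lemma d_coef_k:
  assumes k2: "k \<ge> 2" and "n \<ge> 2"
  shows "d_coef k n k = s_coef k (n - 1)"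
proof -
  obtain m where n: "n = Suc (Suc m)"
    using \<open>n \<ge> 2\<close> by (metis add_2_eq_Suc le_Suc_ex)
  have "k \<le> (k - 1) * n"
    using self_le_pred_mult[OF k2 \<open>n \<ge> 2\<close>] .
  then have "d_coef k n k = real ((k * Suc m - 2) choose m)
     - (\<Sum>i<m. s_coef k (Suc i) * real ((k * (m - i) - 1) choose (m - i)))"
    using d_coef_eq[OF k2 \<open>n \<ge> 2\<close> order.refl] n
    by (simp add: sum.atLeast1_atMost_eq algebra_simps)
  also have "real ((k * Suc m - 2) choose m)
      = (\<Sum>i<m. s_coef k (Suc i) * real ((k * (m - i) - 1) choose (m - i))) + s_coef k (Suc m)"
    using fuss_catalan_convolution_nat[OF k2, where y = 0 and n = m]
    by (simp add: lessThan_Suc_atMost[symmetric])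
  finally show ?thesis
    using n by simp
qed

lemma d_coef_eq_split:
  assumes "k \<ge> 2" and "n \<ge> 3" and "k \<le> j" and "j \<le> (k - 1) * n"
  shows "d_coef k n j = real ((k * n - 2 - j) choose (n - 2))
     - (\<Sum>l = 1..n - 3. s_coef k l * real ((k * (n - l) - 1 - j) choose (n - l - 1)))
     - s_coef k (n - 2) * real (2 * k - 1 - j)"
proof -
  have split: "(\<Sum>l = 1..n - 2. f l) = (\<Sum>l = 1..n - 3. f l) + f (n - 2)" for f :: "nat \<Rightarrow> real"
  proof -
    have "n - 2 = Suc (n - 3)"
      using assms(2) by simp
    then show ?thesis
      by simp
  qed
  have "n - (n - 2) = 2"
    using assms(2) by simp
  then show ?thesis
    using d_coef_eq[OF assms(1) _ assms(3,4), unfolded split] assms(2) by (simp add: mult.commute)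
qed

lemma d_coef_diff:
  assumes k2: "k \<ge> 2" and n3: "n \<ge> 3" and "k \<le> i" and "Suc i \<le> (k - 1) * n"
  shows "d_coef k n i - d_coef k n (Suc i) =
     real ((k * n - 3 - i) choose (n - 3))
     - (\<Sum>l = 1..n - 3. s_coef k l * real ((k * (n - l) - 2 - i) choose (n - l - 2)))
     - (if i \<le> 2 * k - 2 then s_coef k (n - 2) else 0)"
proof -
  have "k * n = (k - 1) * n + n"
    using k2 by (cases k) auto
  then have "1 \<le> k * n - 2 - i"
    using assms by linarith
  then have "real ((k * n - 2 - i) choose (n - 2)) - real ((k * n - 2 - i - 1) choose (n - 2))
      = real ((k * n - 2 - i - 1) choose (n - 2 - 1))"
    using n3 by (intro binomial_diff_pred) auto
  then have leading: "real ((k * n - 2 - i) choose (n - 2))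
      - real ((k * n - 2 - Suc i) choose (n - 2)) = real ((k * n - 3 - i) choose (n - 3))"
    by (simp add: numeral_eq_Suc)
  have inner: "real ((k * (n - l) - 1 - i) choose (n - l - 1))
      - real ((k * (n - l) - 1 - Suc i) choose (n - l - 1))
      = real ((k * (n - l) - 2 - i) choose (n - l - 2))" if "l \<in> {1..n - 3}" for l
  proof -
    have "2 \<le> n - l - 1"
      using that n3 by auto
    then have "real ((k * (n - l) - 1 - i) choose (n - l - 1))
        - real ((k * (n - l) - 1 - i - 1) choose (n - l - 1))
        = real ((k * (n - l) - 1 - i - 1) choose (n - l - 1 - 1))"
      by (intro binomial_diff_pred) auto
    then show ?thesis
      by (simp add: numeral_eq_Suc)
  qed
  have last: "real (2 * k - 1 - i) - real (2 * k - 1 - Suc i) = (if i \<le> 2 * k - 2 then 1 else 0)"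
    using k2 by (cases "i \<le> 2 * k - 2") simp_all
  have "d_coef k n i - d_coef k n (Suc i)
      = (real ((k * n - 2 - i) choose (n - 2)) - real ((k * n - 2 - Suc i) choose (n - 2)))
        - (\<Sum>l = 1..n - 3. s_coef k l * (real ((k * (n - l) - 1 - i) choose (n - l - 1))
            - real ((k * (n - l) - 1 - Suc i) choose (n - l - 1))))
        - s_coef k (n - 2) * (real (2 * k - 1 - i) - real (2 * k - 1 - Suc i))"
    using d_coef_eq_split[OF k2 n3, of i] d_coef_eq_split[OF k2 n3, of "Suc i"] assms
    by (simp add: sum_subtractf right_diff_distrib)
  then show ?thesis
    unfolding leading last using inner by simp
qed

lemma d_coef_Suc_eq_low:
  assumes k2: "k \<ge> 2" and "n \<ge> 3" and "k \<le> i" and "i \<le> 2 * k - 2"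
  shows "d_coef k n (Suc i) = d_coef k n i"
proof -
  obtain m where n: "n = m + 3"
    using \<open>n \<ge> 3\<close> by (metis add.commute le_Suc_ex)
  have "(k - 1) * 3 \<le> (k - 1) * n"
    using n by simp
  then have "Suc i \<le> (k - 1) * n"
    using assms by linarith
  have conv: "(\<Sum>j\<le>m. s_coef k (Suc j) * real ((2 * k - 1 - i + k * (m - j) - 1) choose (m - j)))
      = real ((2 * k - 1 - i + k * Suc m - 2) choose m)"
    by (rule fuss_catalan_convolution_nat[OF k2])
  have "(\<Sum>l = 1..n - 3. s_coef k l * real ((k * (n - l) - 2 - i) choose (n - l - 2)))
      = (\<Sum>j<m. s_coef k (Suc j) * real ((2 * k - 1 - i + k * (m - j) - 1) choose (m - j)))"
    unfolding sum.atLeast1_atMost_eq[folded One_nat_def]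
  proof (rule sum.cong)
    fix j
    assume "j \<in> {..<m}"
    then have "k * (n - Suc j) - 2 - i = 2 * k - 1 - i + k * (m - j) - 1"
      using assms n by (simp add: Suc_diff_le algebra_simps)
    then show "s_coef k (Suc j) * real ((k * (n - Suc j) - 2 - i) choose (n - Suc j - 2))
        = s_coef k (Suc j) * real ((2 * k - 1 - i + k * (m - j) - 1) choose (m - j))"
      using n by simp
  qed (simp add: n)
  moreover have "2 * k - 1 - i + k * Suc m - 2 = k * n - 3 - i"
    using assms n by (simp add: algebra_simps)
  ultimately show ?thesis
    using d_coef_diff[OF k2 \<open>n \<ge> 3\<close> \<open>k \<le> i\<close> \<open>Suc i \<le> (k - 1) * n\<close>] conv assms n
    by (simp add: lessThan_Suc_atMost[symmetric])
qed

lemma d_coef_diff_high: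
  assumes k2: "k \<ge> 2" and n3: "n \<ge> 3" and "2 * k - 1 \<le> i" and "Suc i \<le> (k - 1) * n"
  shows "d_coef k n i - d_coef k n (Suc i) = d_coef k (n - 1) (Suc i - k)"
proof -
  have "k * n = k * (n - 1) + k" "(k - 1) * n = (k - 1) * (n - 1) + (k - 1)"
    using n3 by (cases n; simp)+
  then have j: "k \<le> Suc i - k" "Suc i - k \<le> (k - 1) * (n - 1)"
    and leading: "k * (n - 1) - 2 - (Suc i - k) = k * n - 3 - i"
    using assms by linarith+
  have inner: "k * (n - 1 - l) - 1 - (Suc i - k) = k * (n - l) - 2 - i" if "l \<le> n - 3" for l
  proof -
    have "n - l = Suc (n - 1 - l)"
      using that n3 by simp
    then have "k * (n - l) = k * (n - 1 - l) + k"
      by simp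
    then show ?thesis
      using j(1) by linarith
  qed
  have "d_coef k (n - 1) (Suc i - k) = real ((k * (n - 1) - 2 - (Suc i - k)) choose (n - 1 - 2))
      - (\<Sum>l = 1..n - 1 - 2.
          s_coef k l * real ((k * (n - 1 - l) - 1 - (Suc i - k)) choose (n - 1 - l - 1)))"
    using k2 n3 j by (intro d_coef_eq) auto
  also have "\<dots> = real ((k * n - 3 - i) choose (n - 3))
      - (\<Sum>l = 1..n - 3. s_coef k l * real ((k * (n - l) - 2 - i) choose (n - l - 2)))"
    using leading inner by (intro arg_cong2[where f = minus] sum.cong) (auto simp: numeral_eq_Suc)
  finally show ?thesis
    using d_coef_diff[OF k2 n3 _ assms(4)] assms by simp
qed

section \<open>The polynomials \<open>D\<^sub>n\<close>\<close>

text \<open>The value at \<open>n = 1\<close> is the one for which \<open>d_poly_rec\<close> also holds at \<open>n = 2\<close>.\<close>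
definition d_coef_ext :: "nat \<Rightarrow> nat \<Rightarrow> nat \<Rightarrow> real" where
  "d_coef_ext k n j = (if n = 1 then (if j = k - 1 then 1 else 0)
     else if k \<le> j \<and> j \<le> (k - 1) * n then d_coef k n j else 0)"

lemma d_coef_ext_eq_0_above: "(k - 1) * n < j \<Longrightarrow> d_coef_ext k n j = 0"
  by (auto simp: d_coef_ext_def)

lemma d_coef_ext_top:
  assumes "k \<ge> 2" and "n \<ge> 1"
  shows "d_coef_ext k n ((k - 1) * n) = 1"
  using assms self_le_pred_mult[of k n] d_coef_top[of k n] by (auto simp: d_coef_ext_def)

lemma d_coef_ext_diff_interior:
  assumes k2: "k \<ge> 2" and "n \<ge> 2" and "k \<le> i" and "i < (k - 1) * n"
  shows "d_coef_ext k n i - d_coef_ext k n (Suc i) = d_coef_ext k (n - 1) (Suc i - k)"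
proof -
  have "(k - 1) * n = (k - 1) * (n - 1) + (k - 1)"
    using assms by (cases n) auto
  moreover have "(k - 1) * 3 \<le> (k - 1) * n" if "n \<ge> 3"
    using that by simp
  ultimately consider (two) "n = 2" | (low) "n \<ge> 3" "i \<le> 2 * k - 2"
    | (high) "n \<ge> 3" "2 * k - 1 \<le> i" "Suc i - k \<le> (k - 1) * (n - 1)"
    using assms by linarith
  then show ?thesis
  proof cases
    case two
    then show ?thesis
      using assms d_coef_two[OF k2, of i] d_coef_two[OF k2, of "Suc i"] by (simp add: d_coef_ext_def)
  next
    case low
    then have "Suc i - k < k" "n - 1 \<noteq> 1"
      using k2 by linarith+
    then show ?thesis
      using assms d_coef_Suc_eq_low[OF k2 low(1) assms(3) low(2)] by (simp add: d_coef_ext_def)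
  next
    case high
    then have "k \<le> Suc i - k" "n - 1 \<noteq> 1"
      using k2 by linarith+
    then show ?thesis
      using high assms d_coef_diff_high[OF k2 high(1,2)] by (simp add: d_coef_ext_def)
  qed
qed

lemma d_coef_ext_diff:
  assumes k2: "k \<ge> 2" and n2: "n \<ge> 2"
  shows "d_coef_ext k n i - d_coef_ext k n (Suc i) =
     (if Suc i < k then 0
      else d_coef_ext k (n - 1) (Suc i - k) - (if Suc i = k then s_coef k (n - 1) else 0))"
proof -
  have split: "(k - 1) * n = (k - 1) * (n - 1) + (k - 1)"
    using n2 by (cases n) auto
  have "k \<le> (k - 1) * n"
    using self_le_pred_mult[OF assms] .
  consider (below) "Suc i < k" | (at_k) "Suc i = k" | (interior) "k \<le> i" "i < (k - 1) * n"
    | (top) "i = (k - 1) * n" | (above) "(k - 1) * n < i"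
    by linarith
  then show ?thesis
  proof cases
    case below
    then show ?thesis
      using n2 by (simp add: d_coef_ext_def)
  next
    case at_k
    then show ?thesis
      using n2 k2 \<open>k \<le> (k - 1) * n\<close> d_coef_k[OF k2 n2] by (simp add: d_coef_ext_def)
  next
    case interior
    then show ?thesis
      using d_coef_ext_diff_interior[OF assms interior] by simp
  next
    case top
    then have "Suc i - k = (k - 1) * (n - 1)" "k < Suc i"
      using split k2 \<open>k \<le> (k - 1) * n\<close> by linarith+
    then show ?thesis
      using top k2 n2 d_coef_ext_top[of k n] d_coef_ext_top[of k "n - 1"]
      by (simp add: d_coef_ext_eq_0_above)
  next
    case above
    then have "(k - 1) * (n - 1) < Suc i - k" "k < Suc i"
      using split k2 by linarith+
    then show ?thesis
      using above by (simp add: d_coef_ext_eq_0_above)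
  qed
qed

definition d_poly :: "nat \<Rightarrow> nat \<Rightarrow> real poly" where
  "d_poly k n = (\<Sum>j\<le>(k - 1) * n. monom (d_coef_ext k n j) j)"

lemma coeff_d_poly: "coeff (d_poly k n) j = d_coef_ext k n j"
proof -
  have "coeff (d_poly k n) j = (\<Sum>i\<le>(k - 1) * n. if i = j then d_coef_ext k n i else 0)"
    unfolding d_poly_def coeff_sum coeff_monom by (intro sum.cong) auto
  then show ?thesis
    by (simp add: d_coef_ext_eq_0_above)
qed

lemma d_poly_0: "k \<ge> 1 \<Longrightarrow> d_poly k 0 = 0"
  by (simp add: d_poly_def d_coef_ext_def)

lemma d_poly_1: "d_poly k 1 = monom 1 (k - 1)"
  by (rule poly_eqI) (simp add: coeff_d_poly d_coef_ext_def)

lemma d_poly_rec: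
  assumes "k \<ge> 2" and "n \<ge> 2"
  shows "[:-1, 1:] * d_poly k n = monom 1 k * (d_poly k (n - 1) - [:s_coef k (n - 1):])"
proof (rule poly_eqI)
  fix j
  have "[:-1, 1:] * d_poly k n = pCons 0 (d_poly k n) - d_poly k n"
    by (simp add: algebra_simps)
  moreover have "coeff (d_poly k (n - 1) - [:s_coef k (n - 1):]) m
      = d_coef_ext k (n - 1) m - (if m = 0 then s_coef k (n - 1) else 0)" for m
    by (cases m) (simp_all add: coeff_d_poly)
  ultimately show "coeff ([:-1, 1:] * d_poly k n) j
      = coeff (monom 1 k * (d_poly k (n - 1) - [:s_coef k (n - 1):])) j"
    using assms d_coef_ext_diff[OF assms]
    by (cases j) (auto simp: coeff_d_poly coeff_monom_mult d_coef_ext_def)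
qed

lemma poly_d_poly_rec:
  assumes "k \<ge> 2" and "n \<ge> 2"
  shows "(x - 1) * poly (d_poly k n) x = x ^ k * (poly (d_poly k (n - 1)) x - s_coef k (n - 1))"
  using arg_cong[OF d_poly_rec[OF assms], of "\<lambda>P. poly P x"]
  by (simp add: poly_monom algebra_simps)

lemma poly_pderiv_d_poly_rec:
  assumes "k \<ge> 2" and "n \<ge> 2"
  shows "(x - 1) * poly (pderiv (d_poly k n)) x + poly (d_poly k n) x
       = x ^ k * poly (pderiv (d_poly k (n - 1))) x
         + real k * x ^ (k - 1) * (poly (d_poly k (n - 1)) x - s_coef k (n - 1))"
  using arg_cong[OF d_poly_rec[OF assms], of "\<lambda>P. poly (pderiv P) x"]
  by (simp add: pderiv_mult pderiv_monom poly_monom pderiv_pCons pderiv_diff pderiv_smult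
      algebra_simps)

section \<open>Evaluation at \<open>1/p\<close> and generating functions\<close>

text \<open>With \<open>a = p\<^sup>k\<^sup>-\<^sup>1 q\<close>, \<open>x = 1/p\<close> and \<open>D\<^sub>n = d_poly k n\<close>, \<open>d_eval k p n = a\<^sup>n D\<^sub>n(x)\<close> and
  \<open>d_euler_eval k p n = a\<^sup>n x D\<^sub>n'(x)\<close>, which is \<open>q L\<^sub>n\<close> for \<open>n \<ge> 2\<close>.\<close>
definition d_eval :: "nat \<Rightarrow> real \<Rightarrow> nat \<Rightarrow> real" where
  "d_eval k p n = (p ^ (k - 1) * (1 - p)) ^ n * poly (d_poly k n) (1 / p)"

definition d_euler_eval :: "nat \<Rightarrow> real \<Rightarrow> nat \<Rightarrow> real" where
  "d_euler_eval k p n = (p ^ (k - 1) * (1 - p)) ^ n * (1 / p * poly (pderiv (d_poly k n)) (1 / p))"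

lemma poly_d_poly_rec_inverse:
  assumes "k \<ge> 2" and "n \<ge> 2" and "p \<noteq> 0"
  shows "p ^ (k - 1) * (1 - p) * poly (d_poly k n) (1 / p)
       = poly (d_poly k (n - 1)) (1 / p) - s_coef k (n - 1)"
proof -
  define x where "x = 1 / p"
  define P where "P = p ^ (k - 1)"
  define X where "X = x ^ (k - 1)"
  have "p * x = 1" "P * X = 1"
    using assms by (simp_all add: x_def X_def P_def power_one_over)
  moreover have "x ^ k = x * X"
    using assms by (simp add: X_def power_eq_if)
  then have "(x - 1) * poly (d_poly k n) x = x * X * (poly (d_poly k (n - 1)) x - s_coef k (n - 1))"
    using poly_d_poly_rec[OF assms(1,2)] by metis
  ultimately have "P * (1 - p) * poly (d_poly k n) x = poly (d_poly k (n - 1)) x - s_coef k (n - 1)"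
    by algebra
  then show ?thesis
    by (simp add: x_def P_def)
qed

lemma d_eval_rec:
  assumes "k \<ge> 2" and "n \<ge> 2" and "p \<noteq> 0"
  shows "d_eval k p n = d_eval k p (n - 1) - (p ^ (k - 1) * (1 - p)) ^ (n - 1) * s_coef k (n - 1)"
proof -
  have "(p ^ (k - 1) * (1 - p)) ^ n = (p ^ (k - 1) * (1 - p)) ^ (n - 1) * (p ^ (k - 1) * (1 - p))"
    using assms by (cases n) auto
  then show ?thesis
    using poly_d_poly_rec_inverse[OF assms] unfolding d_eval_def
    by (metis (no_types, lifting) mult.assoc right_diff_distrib)
qed

lemma d_euler_eval_rec:
  assumes "k \<ge> 2" and "n \<ge> 2" and "p \<noteq> 0"
  shows "(1 - p) * d_euler_eval k p n
       = (1 - p) * d_euler_eval k p (n - 1) + (real k * (1 - p) - 1) * d_eval k p n"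
proof -
  define x where "x = 1 / p"
  define P where "P = p ^ (k - 1)"
  define X where "X = x ^ (k - 1)"
  define A where "A = (P * (1 - p)) ^ (n - 1)"
  define u where "u = poly (d_poly k n) x"
  define u' where "u' = poly (pderiv (d_poly k n)) x"
  define v' where "v' = poly (pderiv (d_poly k (n - 1))) x"
  have "p * x = 1" "P * X = 1"
    using assms by (simp_all add: x_def X_def P_def power_one_over)
  moreover have "x ^ k = x * X"
    using assms by (simp add: X_def power_eq_if)
  then have "(x - 1) * u' + u = x * X * v' + real k * X * (P * (1 - p) * u)"
    using poly_pderiv_d_poly_rec[OF assms(1,2), of x] poly_d_poly_rec_inverse[OF assms]
    by (simp add: u_def u'_def v'_def x_def X_def P_def)
  ultimately have "(1 - p) * (A * (P * (1 - p)) * (x * u'))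
      = (1 - p) * (A * (x * v')) + (real k * (1 - p) - 1) * (A * (P * (1 - p)) * u)"
    by algebra
  moreover have "(P * (1 - p)) ^ n = A * (P * (1 - p))"
    using assms by (cases n) (auto simp: A_def)
  ultimately show ?thesis
    by (simp add: d_euler_eval_def d_eval_def A_def P_def x_def u_def u'_def v'_def)
qed

lemma d_eval_0: "k \<ge> 1 \<Longrightarrow> d_eval k p 0 = 0"
  by (simp add: d_eval_def d_poly_0)

lemma d_euler_eval_0: "k \<ge> 1 \<Longrightarrow> d_euler_eval k p 0 = 0"
  by (simp add: d_euler_eval_def d_poly_0)

lemma d_eval_1: "p \<noteq> 0 \<Longrightarrow> d_eval k p 1 = 1 - p"
  unfolding d_eval_def d_poly_1 by (simp add: poly_monom power_one_over)

lemma d_euler_eval_1: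
  assumes "k \<ge> 1" and "p \<noteq> 0"
  shows "d_euler_eval k p 1 = (real k - 1) * (1 - p)"
proof -
  have "1 / p * (real (k - 1) * (1 / p) ^ (k - 1 - 1)) = real (k - 1) * (1 / p) ^ (k - 1)"
    by (cases "k - 1") simp_all
  then show ?thesis
    using assms
    unfolding d_euler_eval_def d_poly_1 by (auto simp: pderiv_monom poly_monom power_one_over)
qed

lemma poly_euler_d_poly:
  "x * poly (pderiv (d_poly k n)) x = (\<Sum>j\<le>(k - 1) * n. real j * d_coef_ext k n j * x ^ j)"
proof -
  have pderiv_sum: "pderiv (sum f A) = (\<Sum>i\<in>A. pderiv (f i))" for f :: "nat \<Rightarrow> real poly" and A
    using higher_pderiv_sum[of 1 f A] by simp
  have "x * poly (pderiv (d_poly k n)) x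
      = (\<Sum>j\<le>(k - 1) * n. x * (real j * d_coef_ext k n j * x ^ (j - 1)))"
    unfolding d_poly_def pderiv_sum poly_sum pderiv_monom poly_monom sum_distrib_left by simp
  also have "\<dots> = (\<Sum>j\<le>(k - 1) * n. real j * d_coef_ext k n j * x ^ j)"
    by (intro sum.cong refl) (auto simp: power_eq_if)
  finally show ?thesis .
qed

lemma L_coef_eq_d_euler_eval:
  assumes "n \<ge> 2" and "p \<noteq> 1"
  shows "(1 - p) * L_coef k n p = d_euler_eval k p n"
proof -
  have "(\<Sum>j\<le>(k - 1) * n. real j * d_coef_ext k n j * (1 / p) ^ j)
      = (\<Sum>j = k..(k - 1) * n. real j * d_coef k n j * (1 / p) ^ j)"
    using assms(1) by (intro sum.mono_neutral_cong_right) (auto simp: d_coef_ext_def)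
  then show ?thesis
    using assms(2) poly_euler_d_poly[of "1 / p" k n]
    by (simp add: L_coef_def d_euler_eval_def Let_def)
qed

lemma one_minus_fps_X_mult_nth:
  "((1 - fps_X) * f) $ n = f $ n - (if n = 0 then 0 else f $ (n - 1))"
  for f :: "'a::comm_ring_1 fps"
  by (simp add: left_diff_distrib)

lemma d_eval_fps:
  assumes "k \<ge> 2" and "p \<noteq> 0"
  shows "(1 - fps_X) * Abs_fps (d_eval k p) = fps_const (1 - p) * fps_X
     - fps_X * (S_fps k oo (fps_const (p ^ (k - 1) * (1 - p)) * fps_X))"
proof (rule fps_ext)
  fix n :: nat
  consider "n = 0" | "n = 1" | "n \<ge> 2"
    by linarith
  then show "((1 - fps_X) * Abs_fps (d_eval k p)) $ n = (fps_const (1 - p) * fps_X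
     - fps_X * (S_fps k oo (fps_const (p ^ (k - 1) * (1 - p)) * fps_X))) $ n"
    by cases (use assms d_eval_1 in \<open>simp_all add: one_minus_fps_X_mult_nth d_eval_0 d_eval_rec
      fps_compose_linear S_fps_def\<close>)
qed

lemma d_euler_eval_fps:
  assumes "k \<ge> 2" and "p \<noteq> 0"
  shows "fps_const (1 - p) * ((1 - fps_X) * Abs_fps (d_euler_eval k p))
     = fps_const (real k * (1 - p) - 1) * Abs_fps (d_eval k p) + fps_const ((1 - p) * p) * fps_X"
proof (rule fps_ext)
  fix n :: nat
  consider "n = 0" | "n = 1" | "n \<ge> 2"
    by linarith
  then show "(fps_const (1 - p) * ((1 - fps_X) * Abs_fps (d_euler_eval k p))) $ n
    = (fps_const (real k * (1 - p) - 1) * Abs_fps (d_eval k p) + fps_const ((1 - p) * p) * fps_X) $ n"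
  proof cases
    case 1
    then show ?thesis
      using assms by (simp add: d_eval_0 d_euler_eval_0)
  next
    case 2
    have "d_eval k p 1 = 1 - p" "d_euler_eval k p 1 = (real k - 1) * (1 - p)"
      using assms d_eval_1[of p k] d_euler_eval_1[of k p] by simp_all
    then show ?thesis
      using 2 assms by (simp add: one_minus_fps_X_mult_nth d_euler_eval_0) (simp add: algebra_simps)
  next
    case 3
    then show ?thesis
      using d_euler_eval_rec[OF assms(1) 3 assms(2)]
      by (simp add: one_minus_fps_X_mult_nth right_diff_distrib)
  qed
qed

lemma L_fps_eq:
  assumes "k \<ge> 2" and "p \<noteq> 0" and "p \<noteq> 1"
  shows "fps_const (1 - p) * L_fps k p
     = Abs_fps (d_euler_eval k p) - fps_const ((real k - 1) * (1 - p)) * fps_X"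
proof (rule fps_ext)
  fix n :: nat
  consider "n = 0" | "n = 1" | "n \<ge> 2"
    by linarith
  then show "(fps_const (1 - p) * L_fps k p) $ n
    = (Abs_fps (d_euler_eval k p) - fps_const ((real k - 1) * (1 - p)) * fps_X) $ n"
    by cases (use assms d_euler_eval_1 in \<open>simp_all add: L_fps_def d_euler_eval_0
      L_coef_eq_d_euler_eval\<close>)
qed

lemma L_fps_mult_denominator:
  assumes "k \<ge> 2" and "p \<noteq> 0" and "p \<noteq> 1"
  shows "L_fps k p * (fps_const ((1 - p) ^ 2) * (1 - fps_X) ^ 2) =
    (fps_X * fps_const (real k * p - (real k - 1))
        * (S_fps k oo (fps_const (p ^ (k - 1) * (1 - p)) * fps_X))
      - fps_const (1 - p) * fps_X ^ 2
        * (fps_const ((2 * real k - 1) * p - (2 * real k - 2))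
           + fps_const ((real k - 1) * (1 - p)) * fps_X))"
proof -
  define P where "P = fps_const p"
  define K where "K = fps_const (real k)"
  define S where "S = S_fps k oo (fps_const (p ^ (k - 1) * (1 - p)) * fps_X)"
  define M where "M = Abs_fps (d_eval k p)"
  define E where "E = Abs_fps (d_euler_eval k p)"
  have const_eqs: "fps_const (1 - p) = 1 - P" "fps_const ((1 - p) ^ 2) = (1 - P) ^ 2"
    "fps_const (real k * (1 - p) - 1) = K * (1 - P) - 1" "fps_const ((1 - p) * p) = (1 - P) * P"
    "fps_const ((real k - 1) * (1 - p)) = (K - 1) * (1 - P)"
    "fps_const (real k * p - (real k - 1)) = K * P - (K - 1)"
    "fps_const ((2 * real k - 1) * p - (2 * real k - 2)) = (2 * K - 1) * P - (2 * K - 2)"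
    by (simp_all add: P_def K_def flip: fps_const_sub fps_const_mult fps_const_power
        fps_numeral_fps_const)
  have "(1 - fps_X) * M = (1 - P) * fps_X - fps_X * S"
    using d_eval_fps[OF assms(1,2)] by (simp only: M_def S_def const_eqs)
  moreover have "(1 - P) * ((1 - fps_X) * E) = (K * (1 - P) - 1) * M + (1 - P) * P * fps_X"
    using d_euler_eval_fps[OF assms(1,2)] by (simp only: M_def E_def const_eqs)
  moreover have "(1 - P) * L_fps k p = E - (K - 1) * (1 - P) * fps_X"
    using L_fps_eq[OF assms] by (simp only: E_def const_eqs)
  ultimately have "L_fps k p * ((1 - P) ^ 2 * (1 - fps_X) ^ 2)
      = fps_X * (K * P - (K - 1)) * S
        - (1 - P) * fps_X ^ 2 * ((2 * K - 1) * P - (2 * K - 2) + (K - 1) * (1 - P) * fps_X)"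
    by algebra
  then show ?thesis
    unfolding const_eqs S_def[symmetric] .
qed

theorem lemma3p2:
  fixes k :: nat and p :: real
  assumes "k \<ge> 2" and "0 < p" and "p < 1"
  shows "L_fps k p =
    (fps_X * fps_const (real k * p - (real k - 1))
        * (S_fps k oo (fps_const (p ^ (k - 1) * (1 - p)) * fps_X))
      - fps_const (1 - p) * fps_X ^ 2
        * (fps_const ((2 * real k - 1) * p - (2 * real k - 2))
           + fps_const ((real k - 1) * (1 - p)) * fps_X))
    / (fps_const ((1 - p) ^ 2) * (1 - fps_X) ^ 2)"
proof -
  have "p \<noteq> 0" "p \<noteq> 1"
    using assms by auto
  moreover have "(fps_const ((1 - p) ^ 2) * (1 - fps_X) ^ 2) $ 0 \<noteq> 0"
    using \<open>p \<noteq> 1\<close> by simp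
  then have "fps_const ((1 - p) ^ 2) * (1 - fps_X) ^ 2 \<noteq> 0"
    by auto
  ultimately show ?thesis
    using L_fps_mult_denominator[OF assms(1)] fps_divide_times_eq by metis
qed

end
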